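(* Let $\mathcal C,\mathcal C^0,\mathcal C_\gamma$ be as defined in the context. Then $\mathcal C\subset\mathcal C^0$ and $\mathcal C\subset\mathcal C_\gamma$ for all $\gamma\geq0$. Moreover, if $G\in\mathcal C^0\setminus\mathcal C$, then there is $\gamma_*(G)>0$ such that $G\in\mathcal C_\gamma$ for all $\gamma\in[0,\gamma_*(G))$.
   Context: $\mathcal{G}$ is the set of finite, simple, connected, undirected, edge-weighted graphs $G=(V,E,\omega)$ with $V=\{1,\dots,n\}$, $n\geq2$, weights $\omega_{ij}=\omega_{ji}>0$ on edges, $0$ otherwise. $d_i=\sum_j\omega_{ij}$. Fixed $r\in[0,1]$: for $u:V\to\mathbb R$, $(\Delta u)_i=d_i^{-r}\sum_j\omega_{ij}(u_i-u_j)$, $\mathcal M(u)=\sum_id_i^ru_i$, $\mathrm{vol}(V)=\sum_id_i^r$, $\mathcal A(u)=\frac{\mathcal M(u)}{\mathrm{vol}(V)}\chi_V$. Equilibrium measure $\nu^S$ ($S\subsetneq V$): unique $\nu:V\to\mathbb R$ with $(\Delta\nu)_i=1$ on $S$, $\nu=0$ off $S$. $f^j:=\nu^{V\setminus\{j\}}-\mathcal A(\nu^{V\setminus\{j\}})$. $\mathcal C=\{G\in\mathcal G:\forall j\in V\ \forall i\in V\setminus\{j\}:\ f^j_i\geq0\}$; $\mathcal C^0=\{G\in\mathcal G:\forall j\ \forall i\neq j:\ \omega_{ij}>0\text{ or }f^j_i\geq0\}$; for $\gamma>0$, $\mathcal C_\gamma=\{G\in\mathcal C^0:\forall j\ \forall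 i\neq j:\ \omega_{ij}=0\text{ or }d_i^{-r}\omega_{ij}+\gamma\frac{d_j^r}{\mathrm{vol}(V)}f^j_i>0\}$; $\mathcal C_0:=\mathcal G$. *)

theory Defs
  imports Complex_Main
begin

text \<open>Weighted graphs on the vertex set V = {1..n}, given by a weight function w.
  w i j > 0 iff ij is an edge; w is symmetric, nonnegative, zero on the diagonal
  (simple graph) and zero outside V x V.\<close>

definition wgraph :: "nat \<Rightarrow> (nat \<Rightarrow> nat \<Rightarrow> real) \<Rightarrow> bool" where
  "wgraph n w \<longleftrightarrow> n \<ge> 2
     \<and> (\<forall>i j. w i j = w j i)
     \<and> (\<forall>i j. 0 \<le> w i j)
     \<and> (\<forall>i. w i i = 0)
     \<and> (\<forall>i j. w i j \<noteq> 0 \<longrightarrow> i \<in> {1..n} \<and> j \<in> {1..n})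
     \<and> (\<forall>i\<in>{1..n}. \<forall>j\<in>{1..n}. (\<lambda>a b. 0 < w a b)\<^sup>*\<^sup>* i j)"

definition deg :: "nat \<Rightarrow> (nat \<Rightarrow> nat \<Rightarrow> real) \<Rightarrow> nat \<Rightarrow> real" where
  "deg n w i = (\<Sum>j\<in>{1..n}. w i j)"

definition lap :: "nat \<Rightarrow> real \<Rightarrow> (nat \<Rightarrow> nat \<Rightarrow> real) \<Rightarrow> (nat \<Rightarrow> real) \<Rightarrow> nat \<Rightarrow> real" where
  "lap n r w u i = deg n w i powr (-r) * (\<Sum>j\<in>{1..n}. w i j * (u i - u j))"

definition mass :: "nat \<Rightarrow> real \<Rightarrow> (nat \<Rightarrow> nat \<Rightarrow> real) \<Rightarrow> (nat \<Rightarrow> real) \<Rightarrow> real" where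
  "mass n r w u = (\<Sum>i\<in>{1..n}. deg n w i powr r * u i)"

definition vol :: "nat \<Rightarrow> real \<Rightarrow> (nat \<Rightarrow> nat \<Rightarrow> real) \<Rightarrow> real" where
  "vol n r w = (\<Sum>i\<in>{1..n}. deg n w i powr r)"

definition avg :: "nat \<Rightarrow> real \<Rightarrow> (nat \<Rightarrow> nat \<Rightarrow> real) \<Rightarrow> (nat \<Rightarrow> real) \<Rightarrow> nat \<Rightarrow> real" where
  "avg n r w u i = (if i \<in> {1..n} then mass n r w u / vol n r w else 0)"

definition eqm :: "nat \<Rightarrow> real \<Rightarrow> (nat \<Rightarrow> nat \<Rightarrow> real) \<Rightarrow> nat set \<Rightarrow> nat \<Rightarrow> real" where
  "eqm n r w S = (THE \<nu>. (\<forall>i\<in>S. lap n r w \<nu> i = 1) \<and> (\<forall>i. i \<notin> S \<longrightarrow> \<nu> i = 0))"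

definition fj :: "nat \<Rightarrow> real \<Rightarrow> (nat \<Rightarrow> nat \<Rightarrow> real) \<Rightarrow> nat \<Rightarrow> nat \<Rightarrow> real" where
  "fj n r w j i = eqm n r w ({1..n} - {j}) i - avg n r w (eqm n r w ({1..n} - {j})) i"

definition classC :: "nat \<Rightarrow> real \<Rightarrow> (nat \<Rightarrow> nat \<Rightarrow> real) \<Rightarrow> bool" where
  "classC n r w \<longleftrightarrow> wgraph n w \<and>
     (\<forall>j\<in>{1..n}. \<forall>i\<in>{1..n} - {j}. 0 \<le> fj n r w j i)"

definition classC0 :: "nat \<Rightarrow> real \<Rightarrow> (nat \<Rightarrow> nat \<Rightarrow> real) \<Rightarrow> bool" where
  "classC0 n r w \<longleftrightarrow> wgraph n w \<and>
     (\<forall>j\<in>{1..n}. \<forall>i\<in>{1..n} - {j}. 0 < w i j \<or> 0 \<le> fj n r w j i)"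

text \<open>C_gamma for gamma > 0 as defined; C_0 is by convention all graphs.\<close>
definition classCg :: "real \<Rightarrow> nat \<Rightarrow> real \<Rightarrow> (nat \<Rightarrow> nat \<Rightarrow> real) \<Rightarrow> bool" where
  "classCg \<gamma> n r w \<longleftrightarrow>
     (if \<gamma> = 0 then wgraph n w
      else classC0 n r w \<and>
        (\<forall>j\<in>{1..n}. \<forall>i\<in>{1..n} - {j}. w i j = 0 \<or>
           deg n w i powr (-r) * w i j + \<gamma> * deg n w j powr r / vol n r w * fj n r w j i > 0))"

end

theory Submission
  imports Defs
begin

text \<open>On every edge the first summand of the C_gamma condition is strictly positive, so the
  condition holds for all gamma \<ge> 0 when f^j is nonnegative off j, and for all small gamma in
  any case because a graph has only finitely many edges.\<close>

lemma add_mult_pos_if_small: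
  fixes a b \<gamma> :: real
  assumes "0 < a" "0 \<le> \<gamma>" "\<gamma> < a / (\<bar>b\<bar> + 1)"
  shows "0 < a + \<gamma> * b"
proof -
  have "\<gamma> * (\<bar>b\<bar> + 1) < a"
    using assms(3) by (simp add: pos_less_divide_eq add_pos_nonneg)
  moreover have "- (\<gamma> * b) \<le> \<gamma> * \<bar>b\<bar>"
    using assms(2) by (metis abs_ge_minus_self abs_mult abs_of_nonneg minus_mult_right)
  ultimately show ?thesis
    using assms(2) by (simp add: algebra_simps)
qed

lemma finite_ex_perturbation_pos:
  fixes a b :: "'a \<Rightarrow> real"
  assumes "finite E" and "\<And>p. p \<in> E \<Longrightarrow> 0 < a p"
  shows "\<exists>\<gamma>s>0. \<forall>\<gamma>. 0 \<le> \<gamma> \<and> \<gamma> < \<gamma>s \<longrightarrow> (\<forall>p\<in>E. 0 < a p + \<gamma> * b p)"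
proof -
  define \<gamma>s where "\<gamma>s = Min (insert 1 ((\<lambda>p. a p / (\<bar>b p\<bar> + 1)) ` E))"
  have "0 < \<gamma>s"
    unfolding \<gamma>s_def using assms by (subst Min_gr_iff) (auto simp: add_pos_nonneg)
  moreover have "\<gamma>s \<le> a p / (\<bar>b p\<bar> + 1)" if "p \<in> E" for p
    unfolding \<gamma>s_def using assms(1) that by (intro Min_le) auto
  ultimately show ?thesis
    using assms(2) add_mult_pos_if_small by (metis order_less_le_trans)
qed

lemma deg_pos_if_edge:
  assumes "wgraph n w" "j \<in> {1..n}" "0 < w i j"
  shows "0 < deg n w i"
proof -
  have "w i j \<le> deg n w i"
    unfolding deg_def by (rule member_le_sum) (use assms in \<open>auto simp: wgraph_def\<close>)
  with assms(3) show ?thesis by linarith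
qed

lemma edge_term_pos:
  assumes "wgraph n w" "j \<in> {1..n}" "0 < w i j"
  shows "0 < deg n w i powr (-r) * w i j"
  using deg_pos_if_edge[OF assms] assms(3) by simp

lemma vol_nonneg: "0 \<le> vol n r w"
  unfolding vol_def by (rule sum_nonneg) simp

lemma classC_imp_classC0: "classC n r w \<Longrightarrow> classC0 n r w"
  by (auto simp: classC_def classC0_def)

lemma classCgI:
  assumes "classC0 n r w"
    and "\<And>i j. j \<in> {1..n} \<Longrightarrow> i \<in> {1..n} - {j} \<Longrightarrow> 0 < w i j \<Longrightarrow>
           deg n w i powr (-r) * w i j + \<gamma> * deg n w j powr r / vol n r w * fj n r w j i > 0"
  shows "classCg \<gamma> n r w"
proof (cases "\<gamma> = 0")
  case True
  with assms(1) show ?thesis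
    by (simp add: classCg_def classC0_def)
next
  case False
  have "wgraph n w"
    using assms(1) by (simp add: classC0_def)
  then have "w i j = 0 \<or> 0 < w i j" for i j
    by (auto simp: wgraph_def order_le_less)
  with False assms show ?thesis
    unfolding classCg_def by (metis (no_types, lifting))
qed

lemma classC_imp_classCg:
  assumes "0 \<le> \<gamma>" "classC n r w"
  shows "classCg \<gamma> n r w"
proof (rule classCgI)
  show "classC0 n r w"
    using assms(2) by (rule classC_imp_classC0)
  fix i j assume j: "j \<in> {1..n}" and i: "i \<in> {1..n} - {j}" and edge: "0 < w i j"
  have "0 \<le> fj n r w j i"
    using assms(2) i j by (auto simp: classC_def)
  then have "0 \<le> \<gamma> * deg n w j powr r / vol n r w * fj n r w j i"
    using assms(1) vol_nonneg[of n r w] by simp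
  moreover have "wgraph n w"
    using assms(2) by (simp add: classC_def)
  then have "0 < deg n w i powr (-r) * w i j"
    using j edge by (rule edge_term_pos)
  ultimately show "deg n w i powr (-r) * w i j + \<gamma> * deg n w j powr r / vol n r w * fj n r w j i > 0"
    by linarith
qed

lemma classC0_imp_classCg_small:
  assumes "classC0 n r w"
  shows "\<exists>\<gamma>s>0. \<forall>\<gamma>. 0 \<le> \<gamma> \<and> \<gamma> < \<gamma>s \<longrightarrow> classCg \<gamma> n r w"
proof -
  have W: "wgraph n w"
    using assms by (simp add: classC0_def)
  define E where "E = {(i, j) \<in> {1..n} \<times> {1..n}. 0 < w i j}"
  have "finite E"
    unfolding E_def by (rule finite_subset[of _ "{1..n} \<times> {1..n}"]) auto
  moreover have "0 < deg n w i powr (-r) * w i j" if "(i, j) \<in> E" for i j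
    using that by (auto simp: E_def intro: edge_term_pos[OF W])
  ultimately obtain \<gamma>s where "0 < \<gamma>s" and small: "\<And>\<gamma>. 0 \<le> \<gamma> \<Longrightarrow> \<gamma> < \<gamma>s \<Longrightarrow> \<forall>(i, j)\<in>E.
      0 < deg n w i powr (-r) * w i j + \<gamma> * (deg n w j powr r / vol n r w * fj n r w j i)"
    using finite_ex_perturbation_pos[of E "\<lambda>(i, j). deg n w i powr (-r) * w i j"
        "\<lambda>(i, j). deg n w j powr r / vol n r w * fj n r w j i"]
    by fastforce
  have "classCg \<gamma> n r w" if "0 \<le> \<gamma>" "\<gamma> < \<gamma>s" for \<gamma>
  proof (rule classCgI[OF assms])
    fix i j assume "j \<in> {1..n}" "i \<in> {1..n} - {j}" "0 < w i j"
    then have "(i, j) \<in> E"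
      by (simp add: E_def)
    with small[OF that] show
      "deg n w i powr (-r) * w i j + \<gamma> * deg n w j powr r / vol n r w * fj n r w j i > 0"
      by (fastforce simp: mult.assoc)
  qed
  with \<open>0 < \<gamma>s\<close> show ?thesis
    by blast
qed

theorem lemma6p3:
  fixes r :: real
  assumes "0 \<le> r" and "r \<le> 1"
  shows "(\<forall>n w. classC n r w \<longrightarrow> classC0 n r w)
       \<and> (\<forall>\<gamma>\<ge>0. \<forall>n w. classC n r w \<longrightarrow> classCg \<gamma> n r w)
       \<and> (\<forall>n w. classC0 n r w \<and> \<not> classC n r w \<longrightarrow>
            (\<exists>\<gamma>s>0. \<forall>\<gamma>. 0 \<le> \<gamma> \<and> \<gamma> < \<gamma>s \<longrightarrow> classCg \<gamma> n r w))"
  using classC_imp_classC0 classC_imp_classCg classC0_imp_classCg_small by blast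

end
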